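(* Let $\mathcal{T},\mathcal{U},\mathcal{B}$ be tile sets with mutually consistent frequencies such that $\mathcal{B}$ consists only of exact tiles and $\mathrm{area}(\mathcal{T})\cap\mathrm{area}(\mathcal{U})\subseteq\mathrm{area}(\mathcal{B})$. Then $d(\mathcal{T},\mathcal{U};\mathcal{B})=1$.
   Context: Fix $n,m\ge1$; $\mathcal{D}$ is the set of $n\times m$ binary matrices. A tile is $T=(t(T),a(T))$ with nonempty $t(T)\subseteq\{1..n\}$, $a(T)\subseteq\{1..m\}$, $\mathrm{area}(T)=t(T)\times a(T)$, $\mathrm{area}(\mathcal{T})=\bigcup_{T\in\mathcal{T}}\mathrm{area}(T)$. $\mathrm{fr}(T;D)=\frac1{|\mathrm{area}(T)|}\sum_{(i,j)\in\mathrm{area}(T)}D(i,j)$, $\mathrm{fr}(T;p)=\sum_Dp(D)\mathrm{fr}(T;D)$. Each tile carries a target frequency $\alpha_T$; tile sets are consistent if some distribution on $\mathcal{D}$ attains all target frequencies simultaneously. For a tile set $\mathcal{T}$, $p^*_{\mathcal{T}}$ is the entropy-maximising distribution among those with $\mathrm{fr}(T;p)=\alpha_T$ for all $T\in\mathcal{T}$. $\mathrm{KL}(\mathcal{T}\|\mathcal{U})=\mathrm{KL}(p^*_{\mathcal{T}}\|p^*_{\mathcal{U}})$. A tile is exact if its frequency is $0$ or $1$. With $\mathcal{M}=\mathcal{T}\cup\mathcal{U}\cup\mathcal{B}$, $d(\mathcal{T},\mathcal{U};\mathcal{B})=\frac{\mathrm{KL}(\mathcal{M}\|\mathcal{U}\cup\mathcal{B})+\mathrm{KL}(\mathcal{M}\|\mathcal{T}\cup\mathcal{B})}{\mathrm{KL}(\mathcal{M}\|\mathcal{B})}$,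 defined as $1$ if $\mathrm{KL}(\mathcal{M}\|\mathcal{B})=0$. *)

theory Defs
  imports Complex_Main
begin

text \<open>Binary n x m matrices are represented by the set of cells (i,j) carrying a 1,
  with 1 \<le> i \<le> n and 1 \<le> j \<le> m.\<close>

definition cells :: "nat \<Rightarrow> nat \<Rightarrow> (nat \<times> nat) set" where
  "cells n m = {1..n} \<times> {1..m}"

definition matrices :: "nat \<Rightarrow> nat \<Rightarrow> (nat \<times> nat) set set" where
  "matrices n m = Pow (cells n m)"

text \<open>A tile is a pair (t(T), a(T)) of row and column sets.\<close>
type_synonym tile = "nat set \<times> nat set"

definition is_tile :: "nat \<Rightarrow> nat \<Rightarrow> tile \<Rightarrow> bool" where
  "is_tile n m T \<longleftrightarrow> fst T \<noteq> {} \<and> fst T \<subseteq> {1..n} \<and> snd T \<noteq> {} \<and> snd T \<subseteq> {1..m}"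

definition area :: "tile \<Rightarrow> (nat \<times> nat) set" where
  "area T = fst T \<times> snd T"

definition area_set :: "tile set \<Rightarrow> (nat \<times> nat) set" where
  "area_set TS = (\<Union>T\<in>TS. area T)"

definition fr_mat :: "tile \<Rightarrow> (nat \<times> nat) set \<Rightarrow> real" where
  "fr_mat T D = (1 / real (card (area T))) * (\<Sum>c\<in>area T. if c \<in> D then 1 else 0)"

text \<open>Distributions on the matrices (values outside the matrix set are irrelevant).\<close>
definition is_distr :: "nat \<Rightarrow> nat \<Rightarrow> ((nat \<times> nat) set \<Rightarrow> real) \<Rightarrow> bool" where
  "is_distr n m p \<longleftrightarrow> (\<forall>D\<in>matrices n m. p D \<ge> 0) \<and> (\<Sum>D\<in>matrices n m. p D) = 1"

definition fr_distr :: "nat \<Rightarrow> nat \<Rightarrow> tile \<Rightarrow> ((nat \<times> nat) set \<Rightarrow> real) \<Rightarrow> real" where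
  "fr_distr n m T p = (\<Sum>D\<in>matrices n m. p D * fr_mat T D)"

text \<open>Target frequencies are given by a global function alpha on tiles.\<close>
definition satisfies :: "nat \<Rightarrow> nat \<Rightarrow> (tile \<Rightarrow> real) \<Rightarrow> tile set \<Rightarrow> ((nat \<times> nat) set \<Rightarrow> real) \<Rightarrow> bool" where
  "satisfies n m \<alpha> TS p \<longleftrightarrow> is_distr n m p \<and> (\<forall>T\<in>TS. fr_distr n m T p = \<alpha> T)"

definition consistent :: "nat \<Rightarrow> nat \<Rightarrow> (tile \<Rightarrow> real) \<Rightarrow> tile set \<Rightarrow> bool" where
  "consistent n m \<alpha> TS \<longleftrightarrow> (\<exists>p. satisfies n m \<alpha> TS p)"

text \<open>Shannon entropy (natural log; note ln 0 = 0 so 0 ln 0 = 0).\<close>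
definition entropy :: "nat \<Rightarrow> nat \<Rightarrow> ((nat \<times> nat) set \<Rightarrow> real) \<Rightarrow> real" where
  "entropy n m p = - (\<Sum>D\<in>matrices n m. p D * ln (p D))"

definition maxent :: "nat \<Rightarrow> nat \<Rightarrow> (tile \<Rightarrow> real) \<Rightarrow> tile set \<Rightarrow> ((nat \<times> nat) set \<Rightarrow> real)" where
  "maxent n m \<alpha> TS = (SOME p. satisfies n m \<alpha> TS p \<and>
      (\<forall>q. satisfies n m \<alpha> TS q \<longrightarrow> entropy n m q \<le> entropy n m p))"

definition KL :: "nat \<Rightarrow> nat \<Rightarrow> ((nat \<times> nat) set \<Rightarrow> real) \<Rightarrow> ((nat \<times> nat) set \<Rightarrow> real) \<Rightarrow> real" where
  "KL n m p q = (\<Sum>D\<in>{D\<in>matrices n m. p D > 0}. p D * ln (p D / q D))"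

definition KL_tiles :: "nat \<Rightarrow> nat \<Rightarrow> (tile \<Rightarrow> real) \<Rightarrow> tile set \<Rightarrow> tile set \<Rightarrow> real" where
  "KL_tiles n m \<alpha> TS US = KL n m (maxent n m \<alpha> TS) (maxent n m \<alpha> US)"

definition exact :: "(tile \<Rightarrow> real) \<Rightarrow> tile \<Rightarrow> bool" where
  "exact \<alpha> T \<longleftrightarrow> \<alpha> T = 0 \<or> \<alpha> T = 1"

definition dtiles :: "nat \<Rightarrow> nat \<Rightarrow> (tile \<Rightarrow> real) \<Rightarrow> tile set \<Rightarrow> tile set \<Rightarrow> tile set \<Rightarrow> real" where
  "dtiles n m \<alpha> TS US BS =
     (let M = TS \<union> US \<union> BS in
      if KL_tiles n m \<alpha> M BS = 0 then 1
      else (KL_tiles n m \<alpha> M (US \<union> BS) + KL_tiles n m \<alpha> M (TS \<union> BS)) / KL_tiles n m \<alpha> M BS)"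

end

(* For S \<subseteq> M the maximum-entropy distributions satisfy the Pythagorean identity
   KL(p*_M || p*_S) = H(p*_S) - H(p*_M), so the claim is equivalent to
   H(p*_M) = H(p*_{T\<union>B}) + H(p*_{U\<union>B}) - H(p*_B).
   The exact tiles fix every cell of area(B). Flipping cells outside the area of a tile set is a
   symmetry of its constraints, and area(T), area(U) meet only inside area(B); hence p*_{T\<union>B}
   depends only on the T-part of a matrix, p*_{U\<union>B} only on the U-part, and p*_B is constant
   on its support. The product r = p*_{T\<union>B} p*_{U\<union>B} / p*_B therefore satisfies all
   constraints of M and has exactly the entropy on the right; Gibbs' inequality against r shows
   that no distribution satisfying M has more. *)

theory Submission
  imports Defs "HOL-Analysis.Analysis"
begin

section \<open>Entropy inequalities\<close>

lemma xlnx_tangent_ge: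
  fixes a y :: real assumes "a \<ge> 0" "y \<ge> 0" "a > 0 \<longrightarrow> y > 0"
  shows "a - y \<le> a * ln a - a * ln y"
proof (cases "a = 0")
  case False
  then have a: "a > 0" and y: "y > 0" using assms by auto
  have "a * ln (y/a) \<le> a * (y/a - 1)"
    using ln_le_minus_one[of "y/a"] a y by (simp add: mult_left_mono)
  then show ?thesis using a y by (simp add: ln_div algebra_simps)
qed (use assms in simp)

lemma xlnx_tangent_eq:
  fixes a y :: real assumes "a \<ge> 0" "y \<ge> 0" "a > 0 \<longrightarrow> y > 0"
    and "a * ln a - a * ln y = a - y"
  shows "a = y"
proof (cases "a = 0")
  case False
  then have a: "a > 0" and y: "y > 0" using assms by auto
  have "a * ln (y/a) = a * (y/a - 1)" using assms(4) a y by (simp add: ln_div algebra_simps)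
  then have "ln (y/a) = y/a - 1" using a by simp
  then show ?thesis using ln_eq_minus_one[of "y/a"] a y by simp
qed (use assms in simp)

lemma xlnx_convex:
  fixes a b t :: real assumes "a \<ge> 0" "b \<ge> 0" "0 \<le> t" "t \<le> 1"
  shows "((1-t)*a + t*b) * ln ((1-t)*a + t*b) \<le> (1-t) * (a * ln a) + t * (b * ln b)"
proof -
  define y where "y = (1-t)*a + t*b"
  show ?thesis
  proof (cases "y > 0")
    case True
    have "(1-t) * (a - y) \<le> (1-t) * (a * ln a - a * ln y)"
      using xlnx_tangent_ge[of a y] True assms by (simp add: mult_left_mono)
    moreover have "t * (b - y) \<le> t * (b * ln b - b * ln y)"
      using xlnx_tangent_ge[of b y] True assms by (simp add: mult_left_mono)
    moreover have "(1-t) * (a - y) + t * (b - y) = 0" unfolding y_def by (simp add: algebra_simps)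
    ultimately have "y * ln y \<le> (1-t) * (a * ln a) + t * (b * ln b)"
      unfolding y_def by (simp add: algebra_simps)
    then show ?thesis unfolding y_def .
  next
    case False
    then have "(1-t)*a = 0 \<and> t*b = 0" using assms unfolding y_def
      by (smt (verit) mult_nonneg_nonneg)
    then show ?thesis by auto
  qed
qed

lemma tendsto_xlnx_at_right_0: "((\<lambda>x::real. x * ln x) \<longlongrightarrow> 0) (at_right 0)"
proof -
  have "((\<lambda>x::real. - (ln x / x)) \<longlongrightarrow> 0) at_top"
    using tendsto_minus[OF ln_x_over_x_tendsto_0] by simp
  moreover have "eventually (\<lambda>x::real. - (ln x / x) = inverse x * ln (inverse x)) at_top"
    using eventually_gt_at_top[of "0::real"] by eventually_elim (simp add: ln_inverse divide_inverse)
  ultimately have "((\<lambda>x::real. inverse x * ln (inverse x)) \<longlongrightarrow> 0) at_top"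
    by (rule Lim_transform_eventually)
  then show ?thesis unfolding filterlim_at_right_to_top .
qed

lemma continuous_on_xlnx: "continuous_on {0::real..} (\<lambda>x. x * ln x)"
  unfolding continuous_on_eq_continuous_within
proof
  fix x :: real assume "x \<in> {0..}"
  show "continuous (at x within {0..}) (\<lambda>x. x * ln x)"
  proof (cases "x = 0")
    case True
    then show ?thesis
      using tendsto_xlnx_at_right_0 unfolding continuous_within by (simp add: at_within_Ici_at_right)
  next
    case False
    then have "isCont (\<lambda>x. x * ln x) x" using \<open>x \<in> {0..}\<close> by (auto intro!: continuous_intros)
    then show ?thesis using continuous_at_imp_continuous_at_within by blast
  qed
qed

lemma gibbs_gap_sum:
  fixes p q :: "'a \<Rightarrow> real"
  assumes "\<forall>x\<in>A. p x \<ge> 0" "\<forall>x\<in>A. q x \<ge> 0" "\<forall>x\<in>A. p x > 0 \<longrightarrow> q x > 0"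
    and "sum p A = 1" "sum q A \<le> 1"
  shows "0 \<le> (\<Sum>x\<in>A. p x * ln (p x) - p x * ln (q x) - (p x - q x))"
    and "(\<Sum>x\<in>A. p x * ln (p x) - p x * ln (q x) - (p x - q x))
           \<le> (\<Sum>x\<in>A. p x * ln (p x)) - (\<Sum>x\<in>A. p x * ln (q x))"
proof -
  show "0 \<le> (\<Sum>x\<in>A. p x * ln (p x) - p x * ln (q x) - (p x - q x))"
    using xlnx_tangent_ge assms(1-3) by (simp add: sum_nonneg)
  have "(\<Sum>x\<in>A. p x * ln (p x) - p x * ln (q x) - (p x - q x))
          = (\<Sum>x\<in>A. p x * ln (p x)) - (\<Sum>x\<in>A. p x * ln (q x)) - (sum p A - sum q A)"
    by (simp add: sum_subtractf)
  then show "(\<Sum>x\<in>A. p x * ln (p x) - p x * ln (q x) - (p x - q x))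
           \<le> (\<Sum>x\<in>A. p x * ln (p x)) - (\<Sum>x\<in>A. p x * ln (q x))"
    using assms(4,5) by linarith
qed

lemma gibbs_inequality:
  fixes p q :: "'a \<Rightarrow> real"
  assumes "\<forall>x\<in>A. p x \<ge> 0" "\<forall>x\<in>A. q x \<ge> 0" "\<forall>x\<in>A. p x > 0 \<longrightarrow> q x > 0"
    and "sum p A = 1" "sum q A \<le> 1"
  shows "(\<Sum>x\<in>A. p x * ln (q x)) \<le> (\<Sum>x\<in>A. p x * ln (p x))"
  using gibbs_gap_sum[OF assms] by linarith

lemma gibbs_equality:
  fixes p q :: "'a \<Rightarrow> real"
  assumes "finite A" "\<forall>x\<in>A. p x \<ge> 0" "\<forall>x\<in>A. q x \<ge> 0" "\<forall>x\<in>A. p x > 0 \<longrightarrow> q x > 0"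
    and "sum p A = 1" "sum q A \<le> 1"
    and "(\<Sum>x\<in>A. p x * ln (q x)) = (\<Sum>x\<in>A. p x * ln (p x))"
  shows "\<forall>x\<in>A. p x = q x"
proof -
  define g where "g x = p x * ln (p x) - p x * ln (q x) - (p x - q x)" for x
  note gap = gibbs_gap_sum[OF assms(2-6), folded g_def]
  have "sum g A = 0" using gap assms(7) by linarith
  moreover have "\<forall>x\<in>A. 0 \<le> g x" using xlnx_tangent_ge assms(2-4) unfolding g_def by simp
  ultimately have g0: "\<forall>x\<in>A. g x = 0" using sum_nonneg_eq_0_iff[OF assms(1)] by blast
  show ?thesis
  proof
    fix x assume "x \<in> A"
    then have "p x * ln (p x) - p x * ln (q x) = p x - q x" using g0 unfolding g_def by simp
    then show "p x = q x" using xlnx_tangent_eq[of "p x" "q x"] assms(2-4) \<open>x \<in> A\<close> by blast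
  qed
qed

section \<open>Maximum-entropy distributions\<close>

definition is_maxent :: "nat \<Rightarrow> nat \<Rightarrow> (tile \<Rightarrow> real) \<Rightarrow> tile set \<Rightarrow> ((nat \<times> nat) set \<Rightarrow> real) \<Rightarrow> bool"
  where "is_maxent n m \<alpha> S q \<longleftrightarrow> satisfies n m \<alpha> S q \<and>
    (\<forall>p. satisfies n m \<alpha> S p \<longrightarrow> entropy n m p \<le> entropy n m q)"

definition cross_entropy ::
    "nat \<Rightarrow> nat \<Rightarrow> ((nat \<times> nat) set \<Rightarrow> real) \<Rightarrow> ((nat \<times> nat) set \<Rightarrow> real) \<Rightarrow> real"
  where "cross_entropy n m p q = - (\<Sum>D\<in>matrices n m. p D * ln (q D))"

lemma finite_matrices: "finite (matrices n m)"
  by (simp add: matrices_def cells_def)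

lemma satisfies_nonneg: "satisfies n m \<alpha> S p \<Longrightarrow> D \<in> matrices n m \<Longrightarrow> p D \<ge> 0"
  unfolding satisfies_def is_distr_def by blast

lemma satisfies_sum: "satisfies n m \<alpha> S p \<Longrightarrow> (\<Sum>D\<in>matrices n m. p D) = 1"
  unfolding satisfies_def is_distr_def by blast

lemma satisfies_subset: "S' \<subseteq> S \<Longrightarrow> satisfies n m \<alpha> S p \<Longrightarrow> satisfies n m \<alpha> S' p"
  unfolding satisfies_def by auto

lemma consistent_subset: "S' \<subseteq> S \<Longrightarrow> consistent n m \<alpha> S \<Longrightarrow> consistent n m \<alpha> S'"
  unfolding consistent_def using satisfies_subset by blast

lemma satisfies_restrict:
  "satisfies n m \<alpha> S (restrict p (matrices n m)) \<longleftrightarrow> satisfies n m \<alpha> S p"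
  unfolding satisfies_def is_distr_def fr_distr_def by simp

lemma entropy_restrict: "entropy n m (restrict p (matrices n m)) = entropy n m p"
  unfolding entropy_def by simp

lemma closedin_satisfies:
  "closedin (product_topology (\<lambda>_. euclideanreal) (matrices n m))
     {p \<in> extensional (matrices n m). satisfies n m \<alpha> S p}"
    (is "closedin ?X ?F")
proof -
  have proj: "continuous_map ?X euclideanreal (\<lambda>p. p D)" if "D \<in> matrices n m" for D
    using that by (auto intro!: continuous_intros)
  have sum_cont: "continuous_map ?X euclideanreal (\<lambda>p. \<Sum>D\<in>matrices n m. p D * f D)" for f
    by (auto intro!: continuous_map_sum continuous_map_real_mult proj finite_matrices)
  have top: "topspace ?X = extensional (matrices n m)" by (simp add: PiE_def)
  let ?pre = "\<lambda>f c. {p \<in> topspace ?X. f p \<in> c}"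
  define K where "K = insert (?pre (\<lambda>p. \<Sum>D\<in>matrices n m. p D * 1) {1})
      ((\<lambda>D. ?pre (\<lambda>p. p D) {0..}) ` matrices n m
       \<union> (\<lambda>T. ?pre (\<lambda>p. \<Sum>D\<in>matrices n m. p D * fr_mat T D) {\<alpha> T}) ` S)"
  have "?F = \<Inter>K"
    unfolding top K_def satisfies_def is_distr_def fr_distr_def by auto
  also have "closedin ?X \<dots>"
  proof (intro closedin_Inter)
    have pre: "closedin ?X (?pre f c)" if "continuous_map ?X euclideanreal f" "closed c" for f c
      using closedin_continuous_map_preimage[OF that(1)] that(2) by simp
    fix A assume "A \<in> K"
    then consider "A = ?pre (\<lambda>p. \<Sum>D\<in>matrices n m. p D * 1) {1}"
      | D where "D \<in> matrices n m" "A = ?pre (\<lambda>p. p D) {0..}"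
      | T where "A = ?pre (\<lambda>p. \<Sum>D\<in>matrices n m. p D * fr_mat T D) {\<alpha> T}"
      unfolding K_def by blast
    then show "closedin ?X A"
    proof cases
      case 1 then show ?thesis using pre[OF sum_cont[of "\<lambda>_. 1"] closed_singleton] by simp
    next
      case (2 D) then show ?thesis using pre[OF proj closed_atLeast] by simp
    next
      case (3 T) then show ?thesis using pre[OF sum_cont closed_singleton] by simp
    qed
  qed (simp add: K_def)
  finally show ?thesis .
qed

lemma compactin_satisfies:
  "compactin (product_topology (\<lambda>_. euclideanreal) (matrices n m))
     {p \<in> extensional (matrices n m). satisfies n m \<alpha> S p}"
    (is "compactin ?X ?F")
proof -
  have "?F \<subseteq> PiE (matrices n m) (\<lambda>_. {0..1})"
  proof
    fix p assume "p \<in> ?F"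
    then have "p D \<in> {0..1}" if "D \<in> matrices n m" for D
      using that member_le_sum[of D "matrices n m" p] satisfies_nonneg satisfies_sum finite_matrices
      by fastforce
    then show "p \<in> PiE (matrices n m) (\<lambda>_. {0..1})" using \<open>p \<in> ?F\<close> by (auto simp: PiE_def)
  qed
  moreover have "compactin ?X (PiE (matrices n m) (\<lambda>_. {0..1}))" by (simp add: compactin_PiE)
  ultimately show ?thesis using closedin_satisfies by (blast intro: closed_compactin)
qed

lemma continuous_map_entropy:
  "continuous_map
     (subtopology (product_topology (\<lambda>_. euclideanreal) (matrices n m)) {p. satisfies n m \<alpha> S p})
     euclideanreal (entropy n m)"
proof -
  let ?Y = "subtopology (product_topology (\<lambda>_. euclideanreal) (matrices n m))
    {p. satisfies n m \<alpha> S p}"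
  have "continuous_map ?Y (top_of_set {0..}) (\<lambda>p. p D)" if "D \<in> matrices n m" for D
    unfolding continuous_map_in_subtopology using that satisfies_nonneg
    by (auto intro!: continuous_map_from_subtopology continuous_intros)
  then have "continuous_map ?Y euclideanreal (\<lambda>p. p D * ln (p D))" if "D \<in> matrices n m" for D
    using that continuous_on_xlnx continuous_map_compose[of ?Y _ "\<lambda>p. p D" _ "\<lambda>x::real. x * ln x"]
    unfolding o_def by fastforce
  then show ?thesis
    unfolding entropy_def by (intro continuous_map_minus continuous_map_sum finite_matrices) auto
qed

lemma is_maxent_exists:
  assumes "consistent n m \<alpha> S"
  shows "\<exists>q. is_maxent n m \<alpha> S q"
proof -
  let ?X = "product_topology (\<lambda>_. euclideanreal) (matrices n m)"
  let ?F = "{p \<in> extensional (matrices n m). satisfies n m \<alpha> S p}"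
  have "continuous_map (subtopology ?X ?F) euclideanreal (entropy n m)"
    using continuous_map_entropy by (rule continuous_map_from_subtopology_mono) blast
  then have "compact (entropy n m ` ?F)"
    using image_compactin[of "subtopology ?X ?F"] compactin_satisfies
    by (fastforce simp: compactin_subtopology)
  moreover obtain p0 where "satisfies n m \<alpha> S p0" using assms unfolding consistent_def by blast
  then have "restrict p0 (matrices n m) \<in> ?F" by (simp add: satisfies_restrict)
  ultimately obtain q where q: "q \<in> ?F" and qmax: "\<And>p. p \<in> ?F \<Longrightarrow> entropy n m p \<le> entropy n m q"
    using compact_attains_sup[of "entropy n m ` ?F"] by blast
  have "entropy n m p \<le> entropy n m q" if "satisfies n m \<alpha> S p" for p
    using qmax[of "restrict p (matrices n m)"] that by (simp add: satisfies_restrict entropy_restrict)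
  then show ?thesis using q unfolding is_maxent_def by blast
qed

lemma is_maxent_maxent: "consistent n m \<alpha> S \<Longrightarrow> is_maxent n m \<alpha> S (maxent n m \<alpha> S)"
  using someI_ex[OF is_maxent_exists] unfolding maxent_def is_maxent_def by blast

lemma satisfies_segment:
  assumes "satisfies n m \<alpha> S q" "satisfies n m \<alpha> S p"
    and "\<forall>D\<in>matrices n m. 0 \<le> q D + t * (p D - q D)"
  shows "satisfies n m \<alpha> S (\<lambda>D. q D + t * (p D - q D))"
proof -
  have "(\<Sum>D\<in>matrices n m. (q D + t * (p D - q D)) * w D)
      = (\<Sum>D\<in>matrices n m. q D * w D)
        + t * ((\<Sum>D\<in>matrices n m. p D * w D) - (\<Sum>D\<in>matrices n m. q D * w D))"
    for w :: "(nat \<times> nat) set \<Rightarrow> real"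
    by (simp add: sum.distrib sum_distrib_left sum_subtractf algebra_simps)
  from this[of "\<lambda>_. 1"] this[of "fr_mat T" for T] show ?thesis
    using assms unfolding satisfies_def is_distr_def fr_distr_def by auto
qed

lemma is_maxent_support:
  assumes q: "is_maxent n m \<alpha> S q" and p: "satisfies n m \<alpha> S p"
    and D0: "D0 \<in> matrices n m" and pD0: "p D0 > 0"
  shows "q D0 > 0"
proof (rule ccontr)
  \<comment> \<open>Moving a step t towards p gains entropy of order -t ln t at D0, which beats the
     linear change elsewhere once t is small.\<close>
  have sq: "satisfies n m \<alpha> S q" using q unfolding is_maxent_def ..
  assume "\<not> q D0 > 0"
  then have qD0: "q D0 = 0" using satisfies_nonneg[OF sq D0] by simp
  define g where "g y = y * ln y" for y :: real
  define K where "K = (\<Sum>D\<in>matrices n m. g (q D) - g (p D))"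
  define t where "t = exp (- (\<bar>K\<bar> + 1) / p D0)"
  have t: "0 < t" "t < 1" unfolding t_def using pD0 by (auto intro: divide_neg_pos)
  have lnt: "p D0 * ln t = - (\<bar>K\<bar> + 1)" unfolding t_def using pD0 by simp
  define r where "r D = q D + t * (p D - q D)" for D
  have r_convex: "r D = (1 - t) * q D + t * p D" for D unfolding r_def by (simp add: algebra_simps)
  have "0 \<le> r D" if "D \<in> matrices n m" for D
    unfolding r_convex using satisfies_nonneg[OF sq that] satisfies_nonneg[OF p that] t by simp
  then have "satisfies n m \<alpha> S r" using satisfies_segment[OF sq p, of t] unfolding r_def by blast
  then have "entropy n m r \<le> entropy n m q" using q unfolding is_maxent_def by blast
  have gain: "g (r D) - g (q D) \<le> t * (g (p D) - g (q D))" if "D \<in> matrices n m" for D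
    using xlnx_convex[of "q D" "p D" t] satisfies_nonneg[OF sq that] satisfies_nonneg[OF p that] t
    unfolding g_def r_convex by (simp add: algebra_simps)
  have gain_D0: "g (r D0) - g (q D0) = t * (g (p D0) - g (q D0)) + t * (p D0 * ln t)"
    unfolding g_def r_def qD0 using t pD0 by (simp add: ln_mult algebra_simps)
  have "entropy n m q - entropy n m r = (\<Sum>D\<in>matrices n m. g (r D) - g (q D))"
    unfolding entropy_def g_def by (simp add: sum_subtractf)
  also have "\<dots> = (g (r D0) - g (q D0)) + (\<Sum>D\<in>matrices n m - {D0}. g (r D) - g (q D))"
    using sum.remove[OF finite_matrices D0] by blast
  also have "\<dots> \<le> t * (p D0 * ln t) + (\<Sum>D\<in>matrices n m. t * (g (p D) - g (q D)))"
  proof -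
    have "(\<Sum>D\<in>matrices n m - {D0}. g (r D) - g (q D))
        \<le> (\<Sum>D\<in>matrices n m - {D0}. t * (g (p D) - g (q D)))"
      using gain by (intro sum_mono) blast
    then show ?thesis
      using gain_D0 sum.remove[OF finite_matrices D0, of "\<lambda>D. t * (g (p D) - g (q D))"] by simp
  qed
  also have "\<dots> = t * (- (\<bar>K\<bar> + 1) - K)"
    unfolding lnt K_def by (simp add: sum_distrib_left[symmetric] sum_subtractf algebra_simps)
  also have "\<dots> < 0" using t by (simp add: mult_pos_neg)
  finally show False using \<open>entropy n m r \<le> entropy n m q\<close> by simp
qed

lemma is_maxent_segment_satisfies:
  assumes q: "is_maxent n m \<alpha> S q" and p: "satisfies n m \<alpha> S p"
  obtains d where "d > 0" "\<And>t. \<bar>t\<bar> < d \<Longrightarrow> satisfies n m \<alpha> S (\<lambda>D. q D + t * (p D - q D))"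
proof
  have sq: "satisfies n m \<alpha> S q" using q unfolding is_maxent_def ..
  let ?Q = "{D \<in> matrices n m. q D > 0}"
  define d where "d = Min (insert 1 ((\<lambda>D. q D / (\<bar>p D - q D\<bar> + 1)) ` ?Q))"
  have fin: "finite ?Q" using finite_matrices by simp
  show "d > 0" unfolding d_def using fin by simp
  fix t :: real assume t: "\<bar>t\<bar> < d"
  have "0 \<le> q D + t * (p D - q D)" if D: "D \<in> matrices n m" for D
  proof (cases "q D > 0")
    case True
    then have "d \<le> q D / (\<bar>p D - q D\<bar> + 1)" unfolding d_def using fin D by simp
    then have "\<bar>t\<bar> * (\<bar>p D - q D\<bar> + 1) < q D"
      using t by (simp add: pos_le_divide_eq) (smt (verit) mult_strict_right_mono abs_ge_zero)
    moreover have "\<bar>t * (p D - q D)\<bar> \<le> \<bar>t\<bar> * (\<bar>p D - q D\<bar> + 1)"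
      by (simp add: abs_mult mult_left_mono)
    ultimately show ?thesis by linarith
  next
    case False
    then have "q D = 0" using satisfies_nonneg[OF sq D] by simp
    moreover have "p D = 0"
      using is_maxent_support[OF q p D] satisfies_nonneg[OF p D] False by fastforce
    ultimately show ?thesis by simp
  qed
  then show "satisfies n m \<alpha> S (\<lambda>D. q D + t * (p D - q D))"
    using satisfies_segment[OF sq p] by blast
qed

lemma xlnx_segment_has_derivative:
  fixes c e :: real assumes "c > 0 \<or> (c = 0 \<and> e = 0)"
  shows "((\<lambda>t. (c + t * e) * ln (c + t * e)) has_field_derivative (e * ln c + e)) (at 0)"
  using assms
proof
  assume "c > 0"
  then have "((\<lambda>t. (c + t * e) * ln (c + t * e)) has_field_derivative
        ((0 + 1 * e) * ln (c + 0 * e) + (c + 0 * e) * ((0 + 1 * e) / (c + 0 * e)))) (at 0)"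
    by (auto intro!: derivative_eq_intros)
  then show ?thesis using \<open>c > 0\<close> by simp
qed simp

lemma is_maxent_cross_entropy:
  assumes q: "is_maxent n m \<alpha> S q" and p: "satisfies n m \<alpha> S p"
  shows "cross_entropy n m p q = entropy n m q"
proof -
  \<comment> \<open>Since the support of p lies in that of q, the line through q and p stays feasible on
     both sides of q, so the entropy along it is stationary at q.\<close>
  have sq: "satisfies n m \<alpha> S q" using q unfolding is_maxent_def ..
  obtain d where d: "d > 0" "\<And>t. \<bar>t\<bar> < d \<Longrightarrow> satisfies n m \<alpha> S (\<lambda>D. q D + t * (p D - q D))"
    using is_maxent_segment_satisfies[OF q p] by blast
  define f where "f t = - entropy n m (\<lambda>D. q D + t * (p D - q D))" for t
  have "f 0 \<le> f t" if "\<bar>0 - t\<bar> < d" for t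
    using q d(2)[of t] that unfolding f_def is_maxent_def by simp
  moreover have "(f has_field_derivative
      (\<Sum>D\<in>matrices n m. (p D - q D) * ln (q D) + (p D - q D))) (at 0)"
    unfolding f_def entropy_def minus_minus
  proof (intro DERIV_sum xlnx_segment_has_derivative)
    fix D assume D: "D \<in> matrices n m"
    show "q D > 0 \<or> (q D = 0 \<and> p D - q D = 0)"
      using is_maxent_support[OF q p D] satisfies_nonneg[OF sq D] satisfies_nonneg[OF p D] by force
  qed
  ultimately have "(\<Sum>D\<in>matrices n m. (p D - q D) * ln (q D) + (p D - q D)) = 0"
    using DERIV_local_min[OF _ d(1)] by blast
  moreover have "(\<Sum>D\<in>matrices n m. p D - q D) = 0"
    using satisfies_sum[OF p] satisfies_sum[OF sq] by (simp add: sum_subtractf)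
  ultimately show ?thesis
    unfolding cross_entropy_def entropy_def by (simp add: sum.distrib left_diff_distrib sum_subtractf)
qed

lemma KL_eq_cross_entropy:
  assumes "\<forall>D\<in>matrices n m. p D \<ge> 0" "\<forall>D\<in>matrices n m. p D > 0 \<longrightarrow> q D > 0"
  shows "KL n m p q = cross_entropy n m p q - entropy n m p"
proof -
  have "KL n m p q = (\<Sum>D\<in>matrices n m. p D * ln (p D) - p D * ln (q D))"
    unfolding KL_def
  proof (rule sum.mono_neutral_cong_left[OF finite_matrices])
    show "\<forall>D\<in>matrices n m - {D \<in> matrices n m. 0 < p D}. p D * ln (p D) - p D * ln (q D) = 0"
      using assms(1) by force
    fix D assume "D \<in> {D \<in> matrices n m. 0 < p D}"
    then have "p D > 0" "q D > 0" using assms(2) by auto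
    then show "p D * ln (p D / q D) = p D * ln (p D) - p D * ln (q D)"
      by (simp add: ln_div algebra_simps)
  qed auto
  then show ?thesis unfolding cross_entropy_def entropy_def by (simp add: sum_subtractf)
qed

lemma entropy_le_cross_entropy:
  assumes "is_distr n m p" "is_distr n m q" "\<forall>D\<in>matrices n m. p D > 0 \<longrightarrow> q D > 0"
  shows "entropy n m p \<le> cross_entropy n m p q"
  using gibbs_inequality[of "matrices n m" p q] assms
  unfolding entropy_def cross_entropy_def is_distr_def by simp

lemma KL_is_maxent:
  assumes q: "is_maxent n m \<alpha> S q" and p: "satisfies n m \<alpha> S p"
  shows "KL n m p q = entropy n m q - entropy n m p"
  using KL_eq_cross_entropy[of n m p q] is_maxent_cross_entropy[OF q p]
    is_maxent_support[OF q p] satisfies_nonneg[OF p] by simp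

lemma KL_tiles_subset:
  assumes "consistent n m \<alpha> M" "S \<subseteq> M"
  shows "KL_tiles n m \<alpha> M S = entropy n m (maxent n m \<alpha> S) - entropy n m (maxent n m \<alpha> M)"
  using KL_is_maxent[OF is_maxent_maxent[OF consistent_subset[OF assms(2,1)]]
      satisfies_subset[OF assms(2)]] is_maxent_maxent[OF assms(1)]
  unfolding KL_tiles_def is_maxent_def by blast

lemma is_maxent_unique:
  assumes q1: "is_maxent n m \<alpha> S q1" and q2: "is_maxent n m \<alpha> S q2" and D: "D \<in> matrices n m"
  shows "q1 D = q2 D"
proof -
  have s1: "satisfies n m \<alpha> S q1" and s2: "satisfies n m \<alpha> S q2"
    using q1 q2 unfolding is_maxent_def by blast+
  have "entropy n m q1 = entropy n m q2" using q1 q2 s1 s2 unfolding is_maxent_def by force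
  then have "(\<Sum>D\<in>matrices n m. q1 D * ln (q2 D)) = (\<Sum>D\<in>matrices n m. q1 D * ln (q1 D))"
    using is_maxent_cross_entropy[OF q2 s1] unfolding cross_entropy_def entropy_def by simp
  then show ?thesis
    using gibbs_equality[OF finite_matrices _ _ _ satisfies_sum[OF s1]] is_maxent_support[OF q2 s1]
      satisfies_nonneg[OF s1] satisfies_nonneg[OF s2] satisfies_sum[OF s2] D by force
qed

lemma maxent_eqI:
  "is_maxent n m \<alpha> S q \<Longrightarrow> D \<in> matrices n m \<Longrightarrow> maxent n m \<alpha> S D = q D"
  using is_maxent_unique is_maxent_maxent unfolding consistent_def is_maxent_def by blast

section \<open>Cell flips and exact tiles\<close>

definition flip_cells :: "(nat \<times> nat) set \<Rightarrow> (nat \<times> nat) set \<Rightarrow> (nat \<times> nat) set" where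
  "flip_cells E D = (D - E) \<union> (E - D)"

lemma flip_cells_in_matrices:
  "E \<subseteq> cells n m \<Longrightarrow> D \<in> matrices n m \<Longrightarrow> flip_cells E D \<in> matrices n m"
  unfolding flip_cells_def matrices_def by auto

lemma flip_cells_flip_cells [simp]: "flip_cells E (flip_cells E D) = D"
  unfolding flip_cells_def by auto

lemma sum_flip_cells:
  "E \<subseteq> cells n m \<Longrightarrow> (\<Sum>D\<in>matrices n m. f (flip_cells E D)) = (\<Sum>D\<in>matrices n m. f D)"
  by (rule sum.reindex_bij_witness[of _ "flip_cells E" "flip_cells E"]) (auto simp: flip_cells_in_matrices)

lemma fr_mat_cong:
  assumes "area T \<inter> D = area T \<inter> D'" shows "fr_mat T D = fr_mat T D'"
proof -
  have "c \<in> D \<longleftrightarrow> c \<in> D'" if "c \<in> area T" for c using assms that by blast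
  then show ?thesis unfolding fr_mat_def by (simp cong: sum.cong)
qed

lemma is_maxent_flip_cells:
  assumes E: "E \<subseteq> cells n m" and disj: "\<forall>T\<in>S. area T \<inter> E = {}" and q: "is_maxent n m \<alpha> S q"
  shows "is_maxent n m \<alpha> S (\<lambda>D. q (flip_cells E D))"
proof -
  have "fr_distr n m T (\<lambda>D. q (flip_cells E D)) = fr_distr n m T q" if "T \<in> S" for T
  proof -
    have "fr_mat T D = fr_mat T (flip_cells E D)" for D
      using disj that by (intro fr_mat_cong) (auto simp: flip_cells_def)
    then show ?thesis
      unfolding fr_distr_def using sum_flip_cells[OF E, of "\<lambda>D. q D * fr_mat T D"] by simp
  qed
  moreover have "entropy n m (\<lambda>D. q (flip_cells E D)) = entropy n m q"
    unfolding entropy_def using sum_flip_cells[OF E, of "\<lambda>D. q D * ln (q D)"] by simp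
  moreover have "is_distr n m (\<lambda>D. q (flip_cells E D))"
    using q sum_flip_cells[OF E, of q] flip_cells_in_matrices[OF E]
    unfolding is_maxent_def satisfies_def is_distr_def by simp
  ultimately show ?thesis using q unfolding is_maxent_def satisfies_def by simp
qed

lemma maxent_flip_cells:
  assumes "consistent n m \<alpha> S" "E \<subseteq> cells n m" "\<forall>T\<in>S. area T \<inter> E = {}" "D \<in> matrices n m"
  shows "maxent n m \<alpha> S (flip_cells E D) = maxent n m \<alpha> S D"
  using maxent_eqI[OF is_maxent_flip_cells[OF assms(2,3) is_maxent_maxent[OF assms(1)]]]
    flip_cells_in_matrices[OF assms(2,4)] by simp

lemma is_tile_area: "is_tile n m T \<Longrightarrow> area T \<subseteq> cells n m \<and> area T \<noteq> {}"
  unfolding is_tile_def area_def cells_def by auto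

lemma finite_area: "is_tile n m T \<Longrightarrow> finite (area T)"
  using is_tile_area[of n m T] finite_subset[of "area T" "cells n m"] by (simp add: cells_def)

lemma fr_mat_card:
  assumes "finite (area T)"
  shows "fr_mat T D = real (card (area T \<inter> D)) / real (card (area T))"
proof -
  have "(\<Sum>c\<in>area T. if c \<in> D then 1 else 0) = real (card (area T \<inter> D))"
    using assms by (simp add: sum.If_cases Int_def)
  then show ?thesis unfolding fr_mat_def by simp
qed

lemma fr_mat_nonneg: "fr_mat T D \<ge> 0"
  unfolding fr_mat_def by (simp add: sum_nonneg)

lemma fr_mat_le_1:
  assumes "is_tile n m T" shows "fr_mat T D \<le> 1"
proof -
  have "card (area T \<inter> D) \<le> card (area T)" using finite_area[OF assms] by (simp add: card_mono)
  then show ?thesis using fr_mat_card[OF finite_area[OF assms]] by (auto simp: divide_le_eq_1)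
qed

lemma fr_mat_eq_1_iff:
  assumes "is_tile n m T" shows "fr_mat T D = 1 \<longleftrightarrow> area T \<subseteq> D"
proof -
  have "card (area T) > 0" using is_tile_area[OF assms] finite_area[OF assms] by (simp add: card_gt_0_iff)
  then have "fr_mat T D = 1 \<longleftrightarrow> card (area T \<inter> D) = card (area T)"
    using fr_mat_card[OF finite_area[OF assms]] by auto
  also have "\<dots> \<longleftrightarrow> area T \<inter> D = area T"
    using card_subset_eq[OF finite_area[OF assms], of "area T \<inter> D"] by auto
  also have "\<dots> \<longleftrightarrow> area T \<subseteq> D" by blast
  finally show ?thesis .
qed

lemma fr_mat_eq_0_iff:
  assumes "is_tile n m T" shows "fr_mat T D = 0 \<longleftrightarrow> area T \<inter> D = {}"
  using fr_mat_card[OF finite_area[OF assms]] finite_area[OF assms] is_tile_area[OF assms] by simp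

lemma sum_weighted_eq_bound:
  fixes p f :: "'a \<Rightarrow> real"
  assumes "finite A" "\<forall>x\<in>A. p x \<ge> 0" "\<forall>x\<in>A. f x \<le> b" "sum p A = 1"
    and "(\<Sum>x\<in>A. p x * f x) = b" and "x \<in> A" "p x > 0"
  shows "f x = b"
proof -
  have "(\<Sum>x\<in>A. p x * (b - f x)) = 0"
    using assms(4,5) by (simp add: right_diff_distrib sum_subtractf sum_distrib_right[symmetric])
  moreover have "\<forall>x\<in>A. p x * (b - f x) \<ge> 0" using assms(2,3) by simp
  ultimately have "p x * (b - f x) = 0"
    using sum_nonneg_eq_0_iff[OF assms(1), of "\<lambda>x. p x * (b - f x)"] assms(6) by simp
  then show ?thesis using assms(7) by simp
qed

lemma satisfies_exact_tile:
  assumes T: "is_tile n m T" "T \<in> S" and p: "satisfies n m \<alpha> S p"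
    and D: "D \<in> matrices n m" "p D > 0"
  shows "\<alpha> T = 1 \<Longrightarrow> area T \<subseteq> D" and "\<alpha> T = 0 \<Longrightarrow> area T \<inter> D = {}"
proof -
  have fr: "(\<Sum>D\<in>matrices n m. p D * fr_mat T D) = \<alpha> T"
    using p T(2) unfolding satisfies_def fr_distr_def by blast
  note weighted = sum_weighted_eq_bound[OF finite_matrices _ _ satisfies_sum[OF p] _ D]
  show "area T \<subseteq> D" if "\<alpha> T = 1"
    using weighted[of "fr_mat T" 1] fr that satisfies_nonneg[OF p] fr_mat_le_1[OF T(1)]
      fr_mat_eq_1_iff[OF T(1)] by simp
  show "area T \<inter> D = {}" if "\<alpha> T = 0"
    using weighted[of "\<lambda>D. - fr_mat T D" 0] fr that satisfies_nonneg[OF p] fr_mat_nonneg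
      fr_mat_eq_0_iff[OF T(1)] by (simp add: sum_negf)
qed

lemma satisfies_exact_tiles:
  assumes "\<forall>B\<in>BS. is_tile n m B \<and> exact \<alpha> B" "BS \<subseteq> S" "satisfies n m \<alpha> S p"
    and "D \<in> matrices n m" "p D > 0"
  shows "D \<inter> area_set BS = area_set {B\<in>BS. \<alpha> B = 1}"
  using satisfies_exact_tile[OF _ _ assms(3-5)] assms(1,2)
  unfolding area_set_def exact_def by blast

lemma sum_Pow_slice:
  fixes f :: "'a set \<Rightarrow> real"
  assumes "finite C" "Z1 \<subseteq> Z" "Z \<subseteq> C" "X \<subseteq> C" "X \<inter> Z = {}"
    and "\<forall>D\<in>Pow C. D \<inter> Z \<noteq> Z1 \<longrightarrow> f D = 0"
  shows "sum f (Pow C) = (\<Sum>P\<in>Pow X. \<Sum>Q\<in>Pow (C - Z - X). f (Z1 \<union> P \<union> Q))"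
proof -
  let ?Y = "C - Z - X"
  have "sum f (Pow C) = sum f {D \<in> Pow C. D \<inter> Z = Z1}"
    using assms(1,6) by (intro sum.mono_neutral_right) auto
  also have "\<dots> = (\<Sum>(P, Q)\<in>Pow X \<times> Pow ?Y. f (Z1 \<union> P \<union> Q))"
    by (rule sum.reindex_bij_witness[of _ "\<lambda>(P, Q). Z1 \<union> P \<union> Q" "\<lambda>D. (D \<inter> X, D \<inter> ?Y)"])
       (use assms(2-5) in \<open>auto intro!: arg_cong[where f=f]\<close>)
  also have "\<dots> = (\<Sum>P\<in>Pow X. \<Sum>Q\<in>Pow ?Y. f (Z1 \<union> P \<union> Q))"
    by (simp add: sum.cartesian_product)
  finally show ?thesis .
qed

section \<open>Tile sets separated by exact tiles\<close>

locale separated_tile_sets =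
  fixes n m :: nat and \<alpha> :: "tile \<Rightarrow> real" and TS US BS :: "tile set"
  assumes tiles: "\<forall>T\<in>TS \<union> US \<union> BS. is_tile n m T"
    and consistent: "consistent n m \<alpha> (TS \<union> US \<union> BS)"
    and exact: "\<forall>B\<in>BS. exact \<alpha> B"
    and overlap: "area_set TS \<inter> area_set US \<subseteq> area_set BS"
begin

text \<open>The cells in Z are forced to the pattern Z1 by the exact tiles; T only sees Z and X,
  U only sees Z and Y.\<close>

definition Z :: "(nat \<times> nat) set" where "Z = area_set BS"
definition Z1 :: "(nat \<times> nat) set" where "Z1 = area_set {B\<in>BS. \<alpha> B = 1}"
definition X :: "(nat \<times> nat) set" where "X = area_set TS - Z"
definition Y :: "(nat \<times> nat) set" where "Y = cells n m - Z - X"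

definition pT :: "(nat \<times> nat) set \<Rightarrow> real" where "pT = maxent n m \<alpha> (TS \<union> BS)"
definition pU :: "(nat \<times> nat) set \<Rightarrow> real" where "pU = maxent n m \<alpha> (US \<union> BS)"
definition pB :: "(nat \<times> nat) set \<Rightarrow> real" where "pB = maxent n m \<alpha> BS"
definition r :: "(nat \<times> nat) set \<Rightarrow> real" where "r D = pT D * pU D / pB D"

lemma is_maxent_of_subset:
  assumes "S \<subseteq> TS \<union> US \<union> BS" shows "is_maxent n m \<alpha> S (maxent n m \<alpha> S)"
  using is_maxent_maxent consistent_subset[OF assms consistent] .

lemma is_maxent_pT: "is_maxent n m \<alpha> (TS \<union> BS) pT"
  unfolding pT_def by (rule is_maxent_of_subset) blast

lemma is_maxent_pU: "is_maxent n m \<alpha> (US \<union> BS) pU"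
  unfolding pU_def by (rule is_maxent_of_subset) blast

lemma is_maxent_pB: "is_maxent n m \<alpha> BS pB"
  unfolding pB_def by (rule is_maxent_of_subset) blast

lemma satisfies_pT: "satisfies n m \<alpha> (TS \<union> BS) pT"
  using is_maxent_pT unfolding is_maxent_def ..

lemma satisfies_pU: "satisfies n m \<alpha> (US \<union> BS) pU"
  using is_maxent_pU unfolding is_maxent_def ..

lemma satisfies_pB: "satisfies n m \<alpha> BS pB"
  using is_maxent_pB unfolding is_maxent_def ..

lemma satisfies_parts:
  assumes "satisfies n m \<alpha> (TS \<union> US \<union> BS) p"
  shows "satisfies n m \<alpha> (TS \<union> BS) p" "satisfies n m \<alpha> (US \<union> BS) p" "satisfies n m \<alpha> BS p"
  by (rule satisfies_subset[OF _ assms]; blast)+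

lemma area_subset_cells: "T \<in> TS \<union> US \<union> BS \<Longrightarrow> area T \<subseteq> cells n m"
  using tiles is_tile_area by blast

lemma Z1_subset_Z: "Z1 \<subseteq> Z"
  unfolding Z1_def Z_def area_set_def by blast

lemma Z_subset_cells: "Z \<subseteq> cells n m"
  unfolding Z_def area_set_def using area_subset_cells by blast

lemma X_subset_cells: "X \<subseteq> cells n m"
  unfolding X_def area_set_def using area_subset_cells by blast

lemma Y_subset_cells: "Y \<subseteq> cells n m"
  unfolding Y_def by blast

lemma X_disjoint_Z: "X \<inter> Z = {}"
  unfolding X_def by blast

lemma area_disjoint_Y: "T \<in> TS \<union> BS \<Longrightarrow> area T \<inter> Y = {}"
  unfolding Y_def X_def Z_def area_set_def by blast

lemma area_disjoint_X: "T \<in> US \<union> BS \<Longrightarrow> area T \<inter> X = {}"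
  using overlap unfolding X_def Z_def area_set_def by blast

lemma vanishes_off_slice:
  assumes "BS \<subseteq> S" "satisfies n m \<alpha> S p" "D \<in> matrices n m" "D \<inter> Z \<noteq> Z1"
  shows "p D = 0"
proof (rule ccontr)
  assume "p D \<noteq> 0"
  then have "p D > 0" using satisfies_nonneg[OF assms(2,3)] by simp
  then have "D \<inter> Z = Z1"
    using satisfies_exact_tiles[OF _ assms(1-3)] tiles exact unfolding Z_def Z1_def by blast
  then show False using assms(4) by simp
qed

lemma maxent_vanishes_off_slice:
  assumes "BS \<subseteq> S" "S \<subseteq> TS \<union> US \<union> BS"
  shows "\<forall>D\<in>matrices n m. D \<inter> Z \<noteq> Z1 \<longrightarrow> maxent n m \<alpha> S D = 0"
  using vanishes_off_slice[OF assms(1)] is_maxent_of_subset[OF assms(2)] unfolding is_maxent_def by blast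

lemma sum_matrices_slice:
  fixes f :: "(nat \<times> nat) set \<Rightarrow> real"
  assumes "\<forall>D\<in>matrices n m. D \<inter> Z \<noteq> Z1 \<longrightarrow> f D = 0"
  shows "sum f (matrices n m) = (\<Sum>P\<in>Pow X. \<Sum>Q\<in>Pow Y. f (Z1 \<union> P \<union> Q))"
  using sum_Pow_slice[OF _ Z1_subset_Z Z_subset_cells X_subset_cells X_disjoint_Z] assms
  unfolding matrices_def Y_def by (simp add: cells_def)

lemma slice_in_matrices: "P \<in> Pow X \<Longrightarrow> Q \<in> Pow Y \<Longrightarrow> Z1 \<union> P \<union> Q \<in> matrices n m"
  using Z1_subset_Z Z_subset_cells X_subset_cells unfolding matrices_def Y_def by auto

lemma maxent_slice_flip:
  assumes "S \<subseteq> TS \<union> US \<union> BS" "E \<subseteq> cells n m" "\<forall>T\<in>S. area T \<inter> E = {}"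
    and "P \<in> Pow X" "Q \<in> Pow Y"
  shows "maxent n m \<alpha> S (flip_cells E (Z1 \<union> P \<union> Q)) = maxent n m \<alpha> S (Z1 \<union> P \<union> Q)"
  using maxent_flip_cells[OF consistent_subset[OF assms(1) consistent] assms(2,3)]
    slice_in_matrices[OF assms(4,5)] .

lemma pT_slice:
  assumes "P \<in> Pow X" "Q \<in> Pow Y" shows "pT (Z1 \<union> P \<union> Q) = pT (Z1 \<union> P)"
proof -
  have "flip_cells Q (Z1 \<union> P \<union> Q) = Z1 \<union> P"
    using assms Z1_subset_Z unfolding flip_cells_def Y_def X_def by auto
  moreover have "pT (flip_cells Q (Z1 \<union> P \<union> Q)) = pT (Z1 \<union> P \<union> Q)"
    unfolding pT_def
    by (rule maxent_slice_flip) (use assms area_disjoint_Y Y_subset_cells in blast)+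
  ultimately show ?thesis by simp
qed

lemma pU_slice:
  assumes "P \<in> Pow X" "Q \<in> Pow Y" shows "pU (Z1 \<union> P \<union> Q) = pU (Z1 \<union> Q)"
proof -
  have "flip_cells P (Z1 \<union> P \<union> Q) = Z1 \<union> Q"
    using assms Z1_subset_Z unfolding flip_cells_def Y_def X_def by auto
  moreover have "pU (flip_cells P (Z1 \<union> P \<union> Q)) = pU (Z1 \<union> P \<union> Q)"
    unfolding pU_def
    by (rule maxent_slice_flip) (use assms area_disjoint_X X_subset_cells in blast)+
  ultimately show ?thesis by simp
qed

lemma pB_slice:
  assumes "P \<in> Pow X" "Q \<in> Pow Y" shows "pB (Z1 \<union> P \<union> Q) = pB Z1"
proof -
  have "flip_cells (P \<union> Q) (Z1 \<union> P \<union> Q) = Z1"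
    using assms Z1_subset_Z unfolding flip_cells_def Y_def X_def by auto
  moreover have "pB (flip_cells (P \<union> Q) (Z1 \<union> P \<union> Q)) = pB (Z1 \<union> P \<union> Q)"
    unfolding pB_def
    by (rule maxent_slice_flip)
      (use assms area_disjoint_X area_disjoint_Y X_subset_cells Y_subset_cells in blast)+
  ultimately show ?thesis by simp
qed

lemma pB_Z1: "real (card (Pow X)) * real (card (Pow Y)) * pB Z1 = 1"
proof -
  have "1 = sum pB (matrices n m)" using satisfies_sum is_maxent_pB unfolding is_maxent_def by metis
  also have "\<dots> = (\<Sum>P\<in>Pow X. \<Sum>Q\<in>Pow Y. pB (Z1 \<union> P \<union> Q))"
    unfolding pB_def by (rule sum_matrices_slice, rule maxent_vanishes_off_slice) auto
  also have "\<dots> = (\<Sum>P\<in>Pow X. \<Sum>Q\<in>Pow Y. pB Z1)" using pB_slice by simp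
  also have "\<dots> = real (card (Pow X)) * real (card (Pow Y)) * pB Z1" by simp
  finally show ?thesis ..
qed

lemma sum_pU_slice: "(\<Sum>Q\<in>Pow Y. pU (Z1 \<union> Q)) = real (card (Pow Y)) * pB Z1"
proof -
  have "1 = sum pU (matrices n m)" using satisfies_sum is_maxent_pU unfolding is_maxent_def by metis
  also have "\<dots> = (\<Sum>P\<in>Pow X. \<Sum>Q\<in>Pow Y. pU (Z1 \<union> P \<union> Q))"
    unfolding pU_def by (rule sum_matrices_slice, rule maxent_vanishes_off_slice) auto
  also have "\<dots> = real (card (Pow X)) * (\<Sum>Q\<in>Pow Y. pU (Z1 \<union> Q))" using pU_slice by simp
  finally have "real (card (Pow X)) * (\<Sum>Q\<in>Pow Y. pU (Z1 \<union> Q))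
      = real (card (Pow X)) * (real (card (Pow Y)) * pB Z1)"
    using pB_Z1 by simp
  moreover have "finite X" using X_subset_cells finite_subset by (auto simp: cells_def)
  ultimately show ?thesis by (simp add: card_Pow)
qed

lemma sum_r_weighted:
  fixes g :: "(nat \<times> nat) set \<Rightarrow> real"
  assumes g: "\<And>P Q. P \<in> Pow X \<Longrightarrow> Q \<in> Pow Y \<Longrightarrow> g (Z1 \<union> P \<union> Q) = g (Z1 \<union> P)"
  shows "(\<Sum>D\<in>matrices n m. r D * g D) = (\<Sum>D\<in>matrices n m. pT D * g D)"
proof -
  have pT0: "\<forall>D\<in>matrices n m. D \<inter> Z \<noteq> Z1 \<longrightarrow> pT D = 0"
    unfolding pT_def by (rule maxent_vanishes_off_slice) auto
  have "pB Z1 \<noteq> 0" using pB_Z1 by auto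
  have "(\<Sum>D\<in>matrices n m. r D * g D)
      = (\<Sum>P\<in>Pow X. \<Sum>Q\<in>Pow Y. pT (Z1 \<union> P) * g (Z1 \<union> P) * (pU (Z1 \<union> Q) / pB Z1))"
    using pT0 by (subst sum_matrices_slice) (auto simp: r_def pT_slice pU_slice pB_slice g mult_ac)
  also have "\<dots> = (\<Sum>P\<in>Pow X. pT (Z1 \<union> P) * g (Z1 \<union> P) * ((\<Sum>Q\<in>Pow Y. pU (Z1 \<union> Q)) / pB Z1))"
    by (simp add: sum_distrib_left sum_divide_distrib)
  also have "\<dots> = (\<Sum>P\<in>Pow X. pT (Z1 \<union> P) * g (Z1 \<union> P)) * real (card (Pow Y))"
    using \<open>pB Z1 \<noteq> 0\<close> by (simp add: sum_pU_slice sum_distrib_right)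
  also have "\<dots> = (\<Sum>P\<in>Pow X. \<Sum>Q\<in>Pow Y. pT (Z1 \<union> P \<union> Q) * g (Z1 \<union> P \<union> Q))"
    by (simp add: pT_slice g sum_distrib_left sum_distrib_right mult_ac)
  also have "\<dots> = (\<Sum>D\<in>matrices n m. pT D * g D)"
    using pT0 by (subst sum_matrices_slice) auto
  finally show ?thesis .
qed

lemma sum_r: "(\<Sum>D\<in>matrices n m. r D) = 1"
  using sum_r_weighted[of "\<lambda>_. 1"] satisfies_sum[OF satisfies_pT] by simp

lemma fr_distr_r: "T \<in> TS \<union> BS \<Longrightarrow> fr_distr n m T r = \<alpha> T"
proof -
  assume T: "T \<in> TS \<union> BS"
  have "fr_mat T (Z1 \<union> P \<union> Q) = fr_mat T (Z1 \<union> P)" if "Q \<in> Pow Y" for P Q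
    using area_disjoint_Y[OF T] that by (intro fr_mat_cong) blast
  then have "fr_distr n m T r = fr_distr n m T pT"
    unfolding fr_distr_def by (intro sum_r_weighted)
  also have "\<dots> = \<alpha> T" using satisfies_pT T unfolding satisfies_def by blast
  finally show ?thesis .
qed

lemma satisfies_r: "satisfies n m \<alpha> (TS \<union> US \<union> BS) r"
proof -
  interpret swap: separated_tile_sets n m \<alpha> US TS BS
    using tiles consistent exact overlap by unfold_locales (auto simp: Un_ac Int_commute)
  have "swap.r = r"
    unfolding swap.r_def r_def swap.pT_def swap.pU_def swap.pB_def pT_def pU_def pB_def
    by (simp add: mult.commute)
  then have "fr_distr n m T r = \<alpha> T" if "T \<in> US" for T using swap.fr_distr_r that by simp
  moreover have "r D \<ge> 0" if "D \<in> matrices n m" for D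
    using satisfies_nonneg[OF satisfies_pT that] satisfies_nonneg[OF satisfies_pU that]
      satisfies_nonneg[OF satisfies_pB that] unfolding r_def by simp
  ultimately show ?thesis using fr_distr_r sum_r unfolding satisfies_def is_distr_def by blast
qed

lemma satisfies_support:
  assumes "satisfies n m \<alpha> (TS \<union> US \<union> BS) p" "D \<in> matrices n m" "p D > 0"
  shows "pT D > 0" "pU D > 0" "pB D > 0"
  using is_maxent_support[OF is_maxent_pT satisfies_parts(1)[OF assms(1)] assms(2,3)]
    is_maxent_support[OF is_maxent_pU satisfies_parts(2)[OF assms(1)] assms(2,3)]
    is_maxent_support[OF is_maxent_pB satisfies_parts(3)[OF assms(1)] assms(2,3)] .

lemma cross_entropy_r:
  assumes p: "satisfies n m \<alpha> (TS \<union> US \<union> BS) p"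
  shows "cross_entropy n m p r = entropy n m pT + entropy n m pU - entropy n m pB"
proof -
  have "p D * ln (r D) = p D * ln (pT D) + p D * ln (pU D) - p D * ln (pB D)"
    if "D \<in> matrices n m" for D
  proof (cases "p D > 0")
    case True
    then show ?thesis using satisfies_support[OF p that]
      by (simp add: r_def ln_mult ln_div algebra_simps)
  next
    case False
    then show ?thesis using satisfies_nonneg[OF p that] by simp
  qed
  then have "cross_entropy n m p r
      = cross_entropy n m p pT + cross_entropy n m p pU - cross_entropy n m p pB"
    unfolding cross_entropy_def by (simp add: sum.distrib sum_subtractf)
  then show ?thesis
    using is_maxent_cross_entropy[OF is_maxent_pT satisfies_parts(1)[OF p]]
      is_maxent_cross_entropy[OF is_maxent_pU satisfies_parts(2)[OF p]]
      is_maxent_cross_entropy[OF is_maxent_pB satisfies_parts(3)[OF p]]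
    by simp
qed

theorem entropy_maxent_union:
  "entropy n m (maxent n m \<alpha> (TS \<union> US \<union> BS)) = entropy n m pT + entropy n m pU - entropy n m pB"
proof -
  \<comment> \<open>r is feasible for all tiles, and every feasible distribution has the same cross-entropy
     against r; this squeezes the maximal entropy.\<close>
  let ?pM = "maxent n m \<alpha> (TS \<union> US \<union> BS)"
  have pM: "is_maxent n m \<alpha> (TS \<union> US \<union> BS) ?pM" using is_maxent_of_subset by blast
  then have sM: "satisfies n m \<alpha> (TS \<union> US \<union> BS) ?pM" unfolding is_maxent_def ..
  have "entropy n m pT + entropy n m pU - entropy n m pB = entropy n m r"
    using cross_entropy_r[OF satisfies_r] unfolding cross_entropy_def entropy_def by simp
  also have "\<dots> \<le> entropy n m ?pM" using pM satisfies_r unfolding is_maxent_def by blast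
  finally have lower: "entropy n m pT + entropy n m pU - entropy n m pB \<le> entropy n m ?pM" .
  have "entropy n m ?pM \<le> cross_entropy n m ?pM r"
  proof (rule entropy_le_cross_entropy)
    show "is_distr n m ?pM" "is_distr n m r" using sM satisfies_r unfolding satisfies_def by blast+
    show "\<forall>D\<in>matrices n m. ?pM D > 0 \<longrightarrow> r D > 0"
      using satisfies_support[OF sM] by (simp add: r_def)
  qed
  then show ?thesis using lower cross_entropy_r[OF sM] by linarith
qed

end

theorem theorem7:
  fixes n m :: nat and \<alpha> :: "tile \<Rightarrow> real" and TS US BS :: "tile set"
  assumes "n \<ge> 1" and "m \<ge> 1"
    and "\<forall>T\<in>TS \<union> US \<union> BS. is_tile n m T"
    and "consistent n m \<alpha> (TS \<union> US \<union> BS)"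
    and "\<forall>T\<in>BS. exact \<alpha> T"
    and "area_set TS \<inter> area_set US \<subseteq> area_set BS"
  shows "dtiles n m \<alpha> TS US BS = 1"
proof -
  interpret separated_tile_sets n m \<alpha> TS US BS
    using assms(3-6) by unfold_locales
  let ?M = "TS \<union> US \<union> BS"
  have "US \<union> BS \<subseteq> ?M" "TS \<union> BS \<subseteq> ?M" "BS \<subseteq> ?M" by blast+
  from this[THEN KL_tiles_subset[OF assms(4)]] entropy_maxent_union
  have "KL_tiles n m \<alpha> ?M (US \<union> BS) + KL_tiles n m \<alpha> ?M (TS \<union> BS) = KL_tiles n m \<alpha> ?M BS"
    unfolding pT_def pU_def pB_def by linarith
  then show ?thesis unfolding dtiles_def Let_def by simp
qed

end
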